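(* Let $\pi_n$ be a posterior density on $\Theta$, let $f^*_{\hat\theta}$ be a probability density symmetric about $\hat\theta\in\Theta$, and let $q^*_{\hat\theta}(\theta)=2f^*_{\hat\theta}(\theta)w^*_{\hat\theta}(\theta)$. Then for every $\hat\theta\in\Theta$ and sample size $n$, $$\mathcal{D}[\pi_n\,\|\,q^*_{\hat\theta}]=\mathcal{D}[\bar\pi_{n,\hat\theta}\,\|\,f^*_{\hat\theta}],$$ and consequently $$\mathcal{D}[\pi_n\,\|\,q^*_{\hat\theta}]\le\mathcal{D}[\pi_n\,\|\,f^*_{\hat\theta}],$$ where $\mathcal{D}$ is either $\mathcal{D}_{TV}$ or any $\alpha$-divergence $\mathcal{D}_\alpha$, $\alpha\in\mathbb{R}\setminus\{0,1\}$ (and the same holds for the limiting Kullback–Leibler cases $\alpha\to0,1$).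
   Context: Posterior $\pi_n(\theta)=\pi(\theta)L(\theta;y_{1:n})/c(y_{1:n})$ on $\Theta\subseteq\mathbb{R}^d$, $\Theta$ symmetric about $\hat\theta$. Symmetric about $\hat\theta$ means $f(\theta)=f(2\hat\theta-\theta)$. Symmetrized posterior: $\bar\pi_{n,\hat\theta}(\theta)=\tfrac12[\pi_n(\theta)+\pi_n(2\hat\theta-\theta)]$. Skewness-inducing factor: $w^*_{\hat\theta}(\theta)=\frac{\pi(\theta)L(\theta;y_{1:n})}{\pi(\theta)L(\theta;y_{1:n})+\pi(2\hat\theta-\theta)L(2\hat\theta-\theta;y_{1:n})}$, set to $1/2$ when numerator and denominator both vanish. $\mathcal{D}_{TV}[p\|q]=\tfrac12\int|p-q|$; $\mathcal{D}_\alpha[p\|q]=\frac{1}{\alpha(1-\alpha)}(1-\int p^\alpha q^{1-\alpha})$; limits $\alpha\to1$: $\mathrm{KL}[p\|q]$, $\alpha\to0$: $\mathrm{KL}[q\|p]$. *)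

theory Defs
  imports "HOL-Analysis.Analysis"
begin

definition reflect :: "'a::real_vector \<Rightarrow> 'a \<Rightarrow> 'a" where
  "reflect th t = 2 *\<^sub>R th - t"

definition symmetric_set :: "'a::real_vector \<Rightarrow> 'a set \<Rightarrow> bool" where
  "symmetric_set th \<Theta> \<longleftrightarrow> (\<forall>t\<in>\<Theta>. reflect th t \<in> \<Theta>)"

definition sym_about :: "'a::real_vector set \<Rightarrow> 'a \<Rightarrow> ('a \<Rightarrow> real) \<Rightarrow> bool" where
  "sym_about \<Theta> th f \<longleftrightarrow> (\<forall>t\<in>\<Theta>. f t = f (reflect th t))"

definition posterior :: "'a measure \<Rightarrow> ('a \<Rightarrow> real) \<Rightarrow> ('a \<Rightarrow> real) \<Rightarrow> 'a \<Rightarrow> real" where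
  "posterior M prior L t = prior t * L t / (\<integral>s. prior s * L s \<partial>M)"

definition sym_posterior ::
  "'a measure \<Rightarrow> ('a \<Rightarrow> real) \<Rightarrow> ('a \<Rightarrow> real) \<Rightarrow> 'a::real_vector \<Rightarrow> 'a \<Rightarrow> real" where
  "sym_posterior M prior L th t =
     (posterior M prior L t + posterior M prior L (reflect th t)) / 2"

definition skew_factor :: "('a \<Rightarrow> real) \<Rightarrow> ('a \<Rightarrow> real) \<Rightarrow> 'a::real_vector \<Rightarrow> 'a \<Rightarrow> real" where
  "skew_factor prior L th t =
     (let a = prior t * L t; b = prior (reflect th t) * L (reflect th t)
      in if a = 0 \<and> a + b = 0 then 1/2 else a / (a + b))"

definition skew_density ::
  "('a \<Rightarrow> real) \<Rightarrow> ('a \<Rightarrow> real) \<Rightarrow> ('a \<Rightarrow> real) \<Rightarrow> 'a::real_vector \<Rightarrow> 'a \<Rightarrow> real" where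
  "skew_density prior L f th t = 2 * f t * skew_factor prior L th t"

definition TV_div :: "'a measure \<Rightarrow> ('a \<Rightarrow> real) \<Rightarrow> ('a \<Rightarrow> real) \<Rightarrow> ereal" where
  "TV_div M p q = ereal (1/2) * enn2ereal (\<integral>\<^sup>+ x. ennreal \<bar>p x - q x\<bar> \<partial>M)"

text \<open>Integrand p^a q^(1-a) for nonnegative p, q, with the usual conventions
  0^b = 0 for b > 0 and 0^b = infinity for b < 0 (a not in {0,1}).\<close>
definition alpha_integrand :: "real \<Rightarrow> real \<Rightarrow> real \<Rightarrow> ennreal" where
  "alpha_integrand a p q =
     (if p > 0 \<and> q > 0 then ennreal (p powr a * q powr (1 - a))
      else if p = 0 \<and> q = 0 then 0
      else if q = 0 then (if a < 1 then 0 else \<infinity>)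
      else (if a > 0 then 0 else \<infinity>))"

definition kl_integrand :: "real \<Rightarrow> real \<Rightarrow> ereal" where
  "kl_integrand p q = (if p = 0 then 0 else if q = 0 then \<infinity> else ereal (p * ln (p / q)))"

text \<open>KL[p||q] = int p log(p/q), as (positive part) - (negative part).\<close>
definition KL_div :: "'a measure \<Rightarrow> ('a \<Rightarrow> real) \<Rightarrow> ('a \<Rightarrow> real) \<Rightarrow> ereal" where
  "KL_div M p q =
     enn2ereal (\<integral>\<^sup>+ x. e2ennreal (kl_integrand (p x) (q x)) \<partial>M)
   - enn2ereal (\<integral>\<^sup>+ x. e2ennreal (- kl_integrand (p x) (q x)) \<partial>M)"

text \<open>alpha-divergence; alpha = 1 gives KL[p||q], alpha = 0 gives KL[q||p] (limiting cases).\<close>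
definition alpha_div :: "'a measure \<Rightarrow> real \<Rightarrow> ('a \<Rightarrow> real) \<Rightarrow> ('a \<Rightarrow> real) \<Rightarrow> ereal" where
  "alpha_div M a p q =
     (if a = 1 then KL_div M p q
      else if a = 0 then KL_div M q p
      else (1 - enn2ereal (\<integral>\<^sup>+ x. alpha_integrand a (p x) (q x) \<partial>M)) / ereal (a * (1 - a)))"

end

theory Submission
  imports Defs
begin

text \<open>Write p for the posterior, m for its symmetrisation and w for the skewness factor. Then
  p = 2 w m and q* = 2 w f*, and the reflection about \<open>th\<close> maps w to 1 - w while fixing m and f*.
  The integrands \<phi>(p, q) of total variation, of the \<alpha>-divergences and of both Kullback-Leibler
  divergences are positively 1-homogeneous, so the values of \<phi>(p, q*) at t and at its reflection
  add up to \<phi>(2m, 2f*) = 2 \<phi>(m, f*); as Lebesgue measure is reflection invariant, integrating gives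
  D[p || q*] = D[m || f*]. The inequality D[m || f*] \<le> D[p || f*] is the same computation with
  midpoint convexity of \<phi> in p (in the second argument for reverse KL, and concavity together with
  the positive factor \<alpha>(1 - \<alpha>) for 0 < \<alpha> < 1).\<close>

lemma powr_convex_nonpos:
  assumes "a \<le> 0"
  shows "convex_on {0<..} (\<lambda>x::real. x powr a)"
proof (rule f''_ge0_imp_convex)
  show "((\<lambda>x. x powr a) has_real_derivative a * x powr (a - 1)) (at x)"
    and "((\<lambda>x. a * x powr (a - 1)) has_real_derivative a * ((a - 1) * x powr (a - 2))) (at x)"
    if "x \<in> {0<..}" for x :: real
    using that by (auto intro!: derivative_eq_intros simp: diff_diff_eq)
  show "0 \<le> a * ((a - 1) * x powr (a - 2))" for x :: real
    using assms by (intro mult_nonpos_nonpos mult_nonpos_nonneg) auto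
qed simp

lemma powr_concave:
  assumes "0 \<le> a" "a \<le> 1"
  shows "concave_on {0<..} (\<lambda>x::real. x powr a)"
proof (rule f''_le0_imp_concave)
  show "((\<lambda>x. x powr a) has_real_derivative a * x powr (a - 1)) (at x)"
    and "((\<lambda>x. a * x powr (a - 1)) has_real_derivative a * ((a - 1) * x powr (a - 2))) (at x)"
    if "x \<in> {0<..}" for x :: real
    using that by (auto intro!: derivative_eq_intros simp: diff_diff_eq)
  show "a * ((a - 1) * x powr (a - 2)) \<le> 0" for x :: real
    using assms by (intro mult_nonneg_nonpos mult_nonpos_nonneg) auto
qed simp

lemma midpoint_convex_pos:
  fixes g :: "real \<Rightarrow> real"
  assumes "convex_on {0<..} g" "0 < x" "0 < y"
  shows "2 * g ((x + y) / 2) \<le> g x + g y"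
  using convex_onD[OF assms(1), of "1/2" x y] assms(2,3) by (simp add: field_simps)

lemma powr_midpoint_convex:
  fixes x y a :: real
  assumes "1 \<le> a" "0 \<le> x" "0 \<le> y"
  shows "2 * ((x + y) / 2) powr a \<le> x powr a + y powr a"
proof -
  have half: "2 * (u / 2) powr a \<le> u powr a" if "0 \<le> u" for u :: real
  proof -
    have "u powr a * 2 \<le> u powr a * 2 powr a"
      using powr_mono[of 1 a 2] assms(1) by (intro mult_left_mono) auto
    then show ?thesis using that by (simp add: powr_divide field_simps)
  qed
  show ?thesis
  proof (cases "x = 0 \<or> y = 0")
    case True
    then show ?thesis using half assms by auto
  next
    case False
    then show ?thesis
      using midpoint_convex_pos[OF powr_convex[OF assms(1)]] assms by simp
  qed
qed

lemma powr_midpoint_concave: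
  fixes x y a :: real
  assumes "0 \<le> a" "a \<le> 1" "0 \<le> x" "0 \<le> y"
  shows "x powr a + y powr a \<le> 2 * ((x + y) / 2) powr a"
proof -
  have half: "u powr a \<le> 2 * (u / 2) powr a" if "0 \<le> u" for u :: real
  proof -
    have "u powr a * 2 powr a \<le> u powr a * 2"
      using powr_mono[of a 1 2] assms(2) by (intro mult_left_mono) auto
    then show ?thesis using that by (simp add: powr_divide field_simps)
  qed
  show ?thesis
  proof (cases "x = 0 \<or> y = 0")
    case True
    then show ?thesis using half assms by auto
  next
    case False
    have "convex_on {0<..} (\<lambda>x. - (x powr a))"
      using powr_concave[OF assms(1,2)] by (simp add: concave_on_def)
    then show ?thesis
      using midpoint_convex_pos[of "\<lambda>x. - (x powr a)" x y] False assms by simp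
  qed
qed

lemma mult_ln_div_ge:
  fixes x z :: real
  assumes x: "0 < x" and z: "0 < z"
  shows "x - z \<le> x * ln (x / z)"
proof -
  have "ln (z / x) \<le> z / x - 1" using ln_le_minus_one[of "z / x"] x z by simp
  then have "x * (1 - z / x) \<le> x * ln (x / z)"
    using x z by (intro mult_left_mono) (auto simp: ln_div)
  moreover have "x * (1 - z / x) = x - z" using x by (simp add: field_simps)
  ultimately show ?thesis by simp
qed

lemma ennreal_two_mult: "2 * ennreal x = ennreal (2 * x)"
  by (cases "0 \<le> x") (simp_all add: ennreal_mult ennreal_neg)

lemma ennreal_pos_neg_parts_le:
  fixes x y z :: real
  assumes "2 * z \<le> x + y"
  shows "ennreal (- x) + ennreal (- y) + 2 * ennreal z \<le> ennreal x + ennreal y + 2 * ennreal (- z)"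
proof -
  have parts: "ennreal u + ennreal v + 2 * ennreal s = ennreal (max u 0 + max v 0 + 2 * max s 0)"
    for u v s :: real
    by (subst (1 2 3) ennreal_max_0[symmetric])
       (simp add: ennreal_two_mult del: ennreal_max_0 flip: ennreal_plus)
  show ?thesis
    unfolding parts using assms by (intro ennreal_leI) (auto simp: max_def)
qed

lemma e2ennreal_ereal_mult: "0 \<le> k \<Longrightarrow> e2ennreal (ereal k * z) = ennreal k * e2ennreal z"
  by (cases z) (auto simp: ennreal_mult' e2ennreal_neg mult_nonneg_nonpos ennreal_mult_top)

lemma e2ennreal_uminus_ereal_mult: "0 \<le> k \<Longrightarrow> e2ennreal (- (ereal k * z)) = ennreal k * e2ennreal (- z)"
  using e2ennreal_ereal_mult[of k "- z"] by simp

lemma e2ennreal_pos_neg_parts_le: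
  fixes x y z :: ereal
  assumes "x \<noteq> -\<infinity>" "y \<noteq> -\<infinity>" "z \<noteq> -\<infinity>" "2 * z \<le> x + y"
  shows "e2ennreal (- x) + e2ennreal (- y) + 2 * e2ennreal z \<le> e2ennreal x + e2ennreal y + 2 * e2ennreal (- z)"
  using assms ennreal_pos_neg_parts_le
  by (cases x; cases y; cases z) (auto simp: e2ennreal_neg)

lemma enn2ereal_diff_le:
  fixes P N P' N' :: ennreal
  assumes "N + P' \<le> P + N'" "N < top" "N' < top"
  shows "enn2ereal P' - enn2ereal N' \<le> enn2ereal P - enn2ereal N"
proof -
  obtain n n' where n: "N = ennreal n" "0 \<le> n" and n': "N' = ennreal n'" "0 \<le> n'"
    using assms(2,3) by (cases N; cases N') auto
  show ?thesis
  proof (cases P)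
    case (real p)
    have "P' \<le> P + N'"
      using order_trans[OF add_increasing[OF zero_le order_refl] assms(1)] .
    also have "\<dots> < top" using real n' by (simp flip: ennreal_plus)
    finally have "P' < top" .
    then obtain p' where "P' = ennreal p'" "0 \<le> p'" by (cases P') auto
    then show ?thesis
      using assms(1) n n' real by (simp add: ennreal_le_iff flip: ennreal_plus)
  qed (use n in simp)
qed

lemma ereal_divide_right_mono_neg:
  fixes u v :: ereal
  assumes "u \<le> v" "d < 0"
  shows "v / ereal d \<le> u / ereal d"
  using assms by (cases u; cases v) (auto simp: divide_right_mono_neg)

section \<open>The divergence integrands\<close>

lemma ennreal_abs_diff_scale:
  "0 \<le> k \<Longrightarrow> ennreal \<bar>k * x - k * y\<bar> = ennreal k * ennreal \<bar>x - y\<bar>"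
  by (simp add: abs_mult ennreal_mult' flip: right_diff_distrib)

lemma ennreal_abs_diff_midpoint_convex:
  "2 * ennreal \<bar>(x + y) / 2 - z\<bar> \<le> ennreal \<bar>x - z\<bar> + ennreal \<bar>y - z\<bar>"
proof -
  have "2 * \<bar>(x + y) / 2 - z\<bar> = \<bar>(x - z) + (y - z)\<bar>" by (simp add: field_simps)
  also have "\<dots> \<le> \<bar>x - z\<bar> + \<bar>y - z\<bar>" by (rule abs_triangle_ineq)
  finally show ?thesis by (simp add: ennreal_two_mult ennreal_leI flip: ennreal_plus)
qed

lemma alpha_integrand_pos:
  "0 \<le> x \<Longrightarrow> 0 < z \<Longrightarrow> 0 < a \<Longrightarrow> alpha_integrand a x z = ennreal (x powr a * z powr (1 - a))"
  by (auto simp: alpha_integrand_def)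

lemma alpha_integrand_scale:
  assumes "0 \<le> k" "0 \<le> x" "0 \<le> y"
  shows "alpha_integrand a (k * x) (k * y) = ennreal k * alpha_integrand a x y"
proof (cases "k = 0")
  case True
  then show ?thesis by (simp add: alpha_integrand_def)
next
  case False
  then have k: "0 < k" using assms(1) by simp
  have "(k * x) powr a * (k * y) powr (1 - a) = k * (x powr a * y powr (1 - a))"
    if "0 < x" "0 < y"
    using k that by (simp add: powr_mult algebra_simps flip: powr_add)
  then show ?thesis
    using k assms by (auto simp: alpha_integrand_def zero_less_mult_iff ennreal_mult' ennreal_mult_top)
qed

lemma alpha_integrand_midpoint_concave:
  assumes "0 < a" "a < 1" "0 \<le> x" "0 \<le> y" "0 \<le> z"
  shows "alpha_integrand a x z + alpha_integrand a y z \<le> 2 * alpha_integrand a ((x + y) / 2) z"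
proof (cases "z = 0")
  case True
  then show ?thesis using assms by (simp add: alpha_integrand_def)
next
  case False
  then have z: "0 < z" using assms by simp
  have "(x powr a + y powr a) * z powr (1 - a) \<le> 2 * (((x + y) / 2) powr a * z powr (1 - a))"
    using mult_right_mono[OF powr_midpoint_concave[of a x y], of "z powr (1 - a)"] assms
    by (simp add: mult.assoc)
  then show ?thesis
    using assms z
    by (simp add: alpha_integrand_pos ennreal_two_mult distrib_right ennreal_leI flip: ennreal_plus)
qed

lemma alpha_integrand_midpoint_convex:
  assumes "a < 0 \<or> 1 < a" "0 \<le> x" "0 \<le> y" "0 \<le> z"
  shows "2 * alpha_integrand a ((x + y) / 2) z \<le> alpha_integrand a x z + alpha_integrand a y z"
proof -
  have scaled: "2 * ((x + y) / 2) powr a * z powr (1 - a) \<le> x powr a * z powr (1 - a) + y powr a * z powr (1 - a)"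
    if "2 * ((x + y) / 2) powr a \<le> x powr a + y powr a"
    using mult_right_mono[OF that, of "z powr (1 - a)"] by (simp add: distrib_right)
  consider "z = 0" | "0 < z" "1 < a" | "0 < z" "a < 0" "x = 0 \<or> y = 0" | "0 < z" "a < 0" "0 < x" "0 < y"
    using assms by fastforce
  then show ?thesis
  proof cases
    case 1
    then show ?thesis
      using assms by (cases "a < 0") (auto simp: alpha_integrand_def add_pos_nonneg add_nonneg_pos)
  next
    case 2
    then show ?thesis
      using assms scaled[OF powr_midpoint_convex[of a x y]]
      by (simp add: alpha_integrand_pos ennreal_two_mult ennreal_leI mult.assoc flip: ennreal_plus)
  next
    case 3
    then show ?thesis by (auto simp: alpha_integrand_def)
  next
    case 4
    then show ?thesis
      using scaled[OF midpoint_convex_pos[OF powr_convex_nonpos]]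
      by (simp add: alpha_integrand_def ennreal_two_mult ennreal_leI mult.assoc flip: ennreal_plus)
  qed
qed

lemma measurable_alpha_integrand [measurable]:
  "(\<lambda>(x, y). alpha_integrand a x y) \<in> borel_measurable (borel \<Otimes>\<^sub>M borel)"
  unfolding alpha_integrand_def by measurable

lemma kl_integrand_scale:
  assumes "0 \<le> k" "0 \<le> x" "0 \<le> y"
  shows "kl_integrand (k * x) (k * y) = ereal k * kl_integrand x y"
  using assms by (cases "k = 0") (auto simp: kl_integrand_def)

lemma kl_integrand_neg_le: "0 \<le> x \<Longrightarrow> 0 \<le> z \<Longrightarrow> e2ennreal (- kl_integrand x z) \<le> ennreal z"
  using mult_ln_div_ge[of x z]
  by (cases "x = 0 \<or> z = 0") (auto simp: kl_integrand_def e2ennreal_neg intro!: ennreal_leI)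

lemma kl_integrand_midpoint_convex:
  assumes "0 \<le> x" "0 \<le> y" "0 \<le> z"
  shows "2 * kl_integrand ((x + y) / 2) z \<le> kl_integrand x z + kl_integrand y z"
proof (cases "z = 0")
  case True
  then show ?thesis using assms by (cases "x = 0"; cases "y = 0") (auto simp: kl_integrand_def)
next
  case False
  then have z: "0 < z" using assms by simp
  have half: "2 * kl_integrand (u / 2) z \<le> kl_integrand u z" if "0 \<le> u" for u
  proof (cases "u = 0")
    case False
    then have u: "0 < u" using that by simp
    have "ln ((u / 2) / z) \<le> ln (u / z)" using u z by (intro ln_mono divide_right_mono) auto
    then have "2 * ((u / 2) * ln ((u / 2) / z)) \<le> u * ln (u / z)" using u by (simp add: mult_left_mono)
    then show ?thesis using u z by (simp add: kl_integrand_def)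
  qed (simp add: kl_integrand_def)
  have both: "2 * (m * ln (m / z)) \<le> x * ln (x / z) + y * ln (y / z)"
    if "0 < x" "0 < y" and m_def: "m = (x + y) / 2" for m
  proof -
    have m: "0 < m" using that by simp
    have ln_split: "ln (u / z) = ln (u / m) + ln (m / z)" if "0 < u" for u
      using that m z by (simp add: ln_div)
    have "x * ln (x / z) + y * ln (y / z) = x * ln (x / m) + y * ln (y / m) + (x + y) * ln (m / z)"
      using ln_split[OF that(1)] ln_split[OF that(2)] by (simp add: algebra_simps)
    moreover have "x + y = 2 * m" by (simp add: m_def)
    ultimately show ?thesis
      using mult_ln_div_ge[OF that(1) m] mult_ln_div_ge[OF that(2) m] by simp
  qed
  consider "x = 0" | "y = 0" | "0 < x" "0 < y" using assms by fastforce
  then show ?thesis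
  proof cases
    case 1
    then show ?thesis using half[of y] assms by (simp add: kl_integrand_def)
  next
    case 2
    then show ?thesis using half[of x] assms by (simp add: kl_integrand_def)
  next
    case 3
    then show ?thesis using both[OF 3 refl] z by (simp add: kl_integrand_def)
  qed
qed

lemma kl_integrand_midpoint_convex_right:
  assumes "0 \<le> x" "0 \<le> y" "0 \<le> z"
  shows "2 * kl_integrand z ((x + y) / 2) \<le> kl_integrand z x + kl_integrand z y"
proof (cases "z = 0 \<or> x = 0 \<or> y = 0")
  case True
  then show ?thesis using assms by (auto simp: kl_integrand_def)
next
  case False
  then have pos: "0 < x" "0 < y" "0 < z" using assms by auto
  define m where "m = (x + y) / 2"
  have m: "0 < m" using pos by (simp add: m_def)
  have "x * y \<le> m * m"
    using sum_squares_ge_zero[of "x - y" 0] by (simp add: m_def power2_eq_square algebra_simps)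
  then have "ln x + ln y \<le> 2 * ln m"
    using pos m ln_mono[of "x * y" "m * m"] by (simp add: ln_mult)
  then have "z * (ln x + ln y) \<le> z * (2 * ln m)"
    using pos by (intro mult_left_mono) auto
  then have "2 * (z * ln (z / m)) \<le> z * ln (z / x) + z * ln (z / y)"
    using pos m by (simp add: ln_div algebra_simps)
  then show ?thesis using pos m by (simp add: kl_integrand_def m_def)
qed

lemma measurable_kl_integrand [measurable]:
  "(\<lambda>(x, y). kl_integrand x y) \<in> borel_measurable (borel \<Otimes>\<^sub>M borel)"
  unfolding kl_integrand_def by measurable

definition signed_nn_integral :: "'a measure \<Rightarrow> ('a \<Rightarrow> ereal) \<Rightarrow> ereal" where
  "signed_nn_integral M F =
     enn2ereal (\<integral>\<^sup>+x. e2ennreal (F x) \<partial>M) - enn2ereal (\<integral>\<^sup>+x. e2ennreal (- F x) \<partial>M)"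

lemma KL_div_eq_signed_nn_integral:
  "KL_div M p q = signed_nn_integral M (\<lambda>x. kl_integrand (p x) (q x))"
  by (simp add: KL_div_def signed_nn_integral_def)

section \<open>Reflection-invariant integrals\<close>

lemma reflect_reflect [simp]: "reflect th (reflect th t) = t"
  by (simp add: reflect_def)

text \<open>The shape of the right-hand side is the one required by \<open>lebesgue_affine_euclidean\<close>.\<close>

lemma reflect_eq_affine:
  "reflect th = (\<lambda>x. 2 *\<^sub>R th + (\<Sum>j\<in>Basis. ((-1::real) * (x \<bullet> j)) *\<^sub>R j))"
proof
  fix x :: 'a
  have "(\<Sum>j\<in>Basis. ((-1::real) * (x \<bullet> j)) *\<^sub>R j) = - (\<Sum>j\<in>Basis. (x \<bullet> j) *\<^sub>R j)"
    by (simp add: sum_negf[symmetric])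
  then show "reflect th x = 2 *\<^sub>R th + (\<Sum>j\<in>Basis. ((-1::real) * (x \<bullet> j)) *\<^sub>R j)"
    by (simp add: reflect_def euclidean_representation)
qed

lemma
  shows lebesgue_distr_reflect: "distr lebesgue lebesgue (reflect th) = lebesgue"
    and measurable_reflect_lebesgue: "reflect th \<in> lebesgue \<rightarrow>\<^sub>M lebesgue"
proof -
  have nz: "\<And>j. j \<in> (Basis::'a set) \<Longrightarrow> (\<lambda>_. -1::real) j \<noteq> 0" by simp
  show "reflect th \<in> lebesgue \<rightarrow>\<^sub>M lebesgue"
    using lebesgue_affine_measurable[OF nz, where t="2 *\<^sub>R th"] by (simp add: reflect_eq_affine)
  show "distr lebesgue lebesgue (reflect th) = lebesgue"
    using lebesgue_affine_euclidean[OF nz, where t="2 *\<^sub>R th"] by (simp add: reflect_eq_affine density_1)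
qed

locale symmetric_domain =
  fixes \<Theta> :: "'a::euclidean_space set" and th :: 'a
  assumes sets_lebesgue: "\<Theta> \<in> sets lebesgue"
    and symmetric: "symmetric_set th \<Theta>"
begin

lemma reflect_mem_iff [simp]: "reflect th t \<in> \<Theta> \<longleftrightarrow> t \<in> \<Theta>"
  using symmetric unfolding symmetric_set_def by (metis reflect_reflect)

lemma measurable_reflect [measurable]: "reflect th \<in> lebesgue_on \<Theta> \<rightarrow>\<^sub>M lebesgue_on \<Theta>"
  by (rule measurable_restrict_space3[OF measurable_reflect_lebesgue]) auto

lemma nn_integral_reflect:
  assumes "G \<in> borel_measurable (lebesgue_on \<Theta>)"
  shows "(\<integral>\<^sup>+t. G (reflect th t) \<partial>lebesgue_on \<Theta>) = (\<integral>\<^sup>+t. G t \<partial>lebesgue_on \<Theta>)"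
proof -
  have \<Theta>: "\<Theta> \<inter> space lebesgue \<in> sets lebesgue" using sets_lebesgue by simp
  let ?G = "\<lambda>t. G t * indicator \<Theta> t"
  have G: "?G \<in> borel_measurable lebesgue"
    using assms borel_measurable_restrict_space_iff_ennreal[OF \<Theta>] by simp
  have "(\<integral>\<^sup>+t. G (reflect th t) \<partial>lebesgue_on \<Theta>) = (\<integral>\<^sup>+t. ?G (reflect th t) \<partial>lebesgue)"
    by (simp add: nn_integral_restrict_space[OF \<Theta>] indicator_def)
  also have "\<dots> = (\<integral>\<^sup>+t. ?G t \<partial>distr lebesgue lebesgue (reflect th))"
    using G by (simp add: nn_integral_distr[OF measurable_reflect_lebesgue])
  also have "\<dots> = (\<integral>\<^sup>+t. G t \<partial>lebesgue_on \<Theta>)"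
    by (simp add: lebesgue_distr_reflect nn_integral_restrict_space[OF \<Theta>])
  finally show ?thesis .
qed

lemma nn_integral_add_reflect:
  assumes [measurable]: "G \<in> borel_measurable (lebesgue_on \<Theta>)"
  shows "(\<integral>\<^sup>+t. G t + G (reflect th t) \<partial>lebesgue_on \<Theta>) = 2 * (\<integral>\<^sup>+t. G t \<partial>lebesgue_on \<Theta>)"
  by (simp add: nn_integral_add nn_integral_reflect mult_2)

lemma nn_integral_le_of_twice_le_add_reflect:
  assumes [measurable]: "G \<in> borel_measurable (lebesgue_on \<Theta>)" "H \<in> borel_measurable (lebesgue_on \<Theta>)"
    and "\<And>t. t \<in> \<Theta> \<Longrightarrow> 2 * H t \<le> G t + G (reflect th t)"
  shows "(\<integral>\<^sup>+t. H t \<partial>lebesgue_on \<Theta>) \<le> (\<integral>\<^sup>+t. G t \<partial>lebesgue_on \<Theta>)"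
proof -
  have "2 * (\<integral>\<^sup>+t. H t \<partial>lebesgue_on \<Theta>) = (\<integral>\<^sup>+t. 2 * H t \<partial>lebesgue_on \<Theta>)"
    by (simp add: nn_integral_cmult)
  also have "\<dots> \<le> (\<integral>\<^sup>+t. G t + G (reflect th t) \<partial>lebesgue_on \<Theta>)"
    using assms(3) by (intro nn_integral_mono) simp
  finally show ?thesis
    by (simp add: nn_integral_add_reflect ennreal_mult_le_mult_iff)
qed

lemma nn_integral_le_of_add_reflect_le_twice:
  assumes [measurable]: "G \<in> borel_measurable (lebesgue_on \<Theta>)" "H \<in> borel_measurable (lebesgue_on \<Theta>)"
    and "\<And>t. t \<in> \<Theta> \<Longrightarrow> G t + G (reflect th t) \<le> 2 * H t"
  shows "(\<integral>\<^sup>+t. G t \<partial>lebesgue_on \<Theta>) \<le> (\<integral>\<^sup>+t. H t \<partial>lebesgue_on \<Theta>)"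
proof -
  have "2 * (\<integral>\<^sup>+t. G t \<partial>lebesgue_on \<Theta>) \<le> (\<integral>\<^sup>+t. 2 * H t \<partial>lebesgue_on \<Theta>)"
    using assms(3) by (simp flip: nn_integral_add_reflect) (intro nn_integral_mono, simp)
  then show ?thesis
    by (simp add: nn_integral_cmult ennreal_mult_le_mult_iff)
qed

lemma nn_integral_eq_of_add_reflect_eq_twice:
  assumes "G \<in> borel_measurable (lebesgue_on \<Theta>)" "H \<in> borel_measurable (lebesgue_on \<Theta>)"
    and "\<And>t. t \<in> \<Theta> \<Longrightarrow> G t + G (reflect th t) = 2 * H t"
  shows "(\<integral>\<^sup>+t. G t \<partial>lebesgue_on \<Theta>) = (\<integral>\<^sup>+t. H t \<partial>lebesgue_on \<Theta>)"
  using assms nn_integral_le_of_twice_le_add_reflect nn_integral_le_of_add_reflect_le_twice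
  by (metis order.antisym order.refl)

lemma signed_nn_integral_le_of_twice_le_add_reflect:
  fixes F H :: "'a \<Rightarrow> ereal"
  assumes [measurable]: "F \<in> borel_measurable (lebesgue_on \<Theta>)" "H \<in> borel_measurable (lebesgue_on \<Theta>)"
    and not_minf: "\<And>t. F t \<noteq> -\<infinity>" "\<And>t. H t \<noteq> -\<infinity>"
    and le: "\<And>t. t \<in> \<Theta> \<Longrightarrow> 2 * H t \<le> F t + F (reflect th t)"
    and "(\<integral>\<^sup>+t. e2ennreal (- F t) \<partial>lebesgue_on \<Theta>) < top"
    and "(\<integral>\<^sup>+t. e2ennreal (- H t) \<partial>lebesgue_on \<Theta>) < top"
  shows "signed_nn_integral (lebesgue_on \<Theta>) H \<le> signed_nn_integral (lebesgue_on \<Theta>) F"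
  unfolding signed_nn_integral_def
proof (rule enn2ereal_diff_le)
  let ?I = "\<lambda>G. \<integral>\<^sup>+t. G t \<partial>lebesgue_on \<Theta>"
  have reflect_parts: "?I (\<lambda>t. e2ennreal (- F (reflect th t))) = ?I (\<lambda>t. e2ennreal (- F t))"
    "?I (\<lambda>t. e2ennreal (F (reflect th t))) = ?I (\<lambda>t. e2ennreal (F t))"
    by (rule nn_integral_reflect, measurable)+
  have "2 * (?I (\<lambda>t. e2ennreal (- F t)) + ?I (\<lambda>t. e2ennreal (H t)))
      = ?I (\<lambda>t. e2ennreal (- F t) + e2ennreal (- F (reflect th t)) + 2 * e2ennreal (H t))"
    by (simp add: nn_integral_add nn_integral_cmult reflect_parts distrib_left mult_2)
  also have "\<dots> \<le> ?I (\<lambda>t. e2ennreal (F t) + e2ennreal (F (reflect th t)) + 2 * e2ennreal (- H t))"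
    using e2ennreal_pos_neg_parts_le[OF not_minf(1,1,2) le] by (intro nn_integral_mono) simp
  also have "\<dots> = 2 * (?I (\<lambda>t. e2ennreal (F t)) + ?I (\<lambda>t. e2ennreal (- H t)))"
    by (simp add: nn_integral_add nn_integral_cmult reflect_parts distrib_left mult_2)
  finally show "?I (\<lambda>t. e2ennreal (- F t)) + ?I (\<lambda>t. e2ennreal (H t))
      \<le> ?I (\<lambda>t. e2ennreal (F t)) + ?I (\<lambda>t. e2ennreal (- H t))"
    by (subst (asm) ennreal_mult_le_mult_iff) auto
qed (use assms in auto)

end

section \<open>Skew decompositions\<close>

text \<open>In the application p is the posterior, m the symmetrised posterior, f the symmetric density f*
  and w the skewness factor; the skewed density q* is then \<open>\<lambda>t. 2 * f t * w t\<close>.\<close>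

locale skew_decomposition = symmetric_domain +
  fixes p m f w :: "'a::euclidean_space \<Rightarrow> real"
  assumes measurable_p [measurable]: "p \<in> borel_measurable (lebesgue_on \<Theta>)"
    and measurable_m [measurable]: "m \<in> borel_measurable (lebesgue_on \<Theta>)"
    and measurable_f [measurable]: "f \<in> borel_measurable (lebesgue_on \<Theta>)"
    and measurable_w [measurable]: "w \<in> borel_measurable (lebesgue_on \<Theta>)"
    and integrable_p: "integrable (lebesgue_on \<Theta>) p"
    and integrable_f: "integrable (lebesgue_on \<Theta>) f"
    and m_nonneg: "t \<in> \<Theta> \<Longrightarrow> 0 \<le> m t"
    and f_nonneg: "t \<in> \<Theta> \<Longrightarrow> 0 \<le> f t"
    and w_nonneg: "t \<in> \<Theta> \<Longrightarrow> 0 \<le> w t"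
    and w_le_1: "t \<in> \<Theta> \<Longrightarrow> w t \<le> 1"
    and p_eq: "t \<in> \<Theta> \<Longrightarrow> p t = 2 * w t * m t"
    and w_reflect: "t \<in> \<Theta> \<Longrightarrow> w (reflect th t) = 1 - w t"
    and m_reflect: "t \<in> \<Theta> \<Longrightarrow> m (reflect th t) = m t"
    and f_reflect: "t \<in> \<Theta> \<Longrightarrow> f (reflect th t) = f t"
begin

lemma p_nonneg: "t \<in> \<Theta> \<Longrightarrow> 0 \<le> p t"
  by (simp add: p_eq m_nonneg w_nonneg)

lemma m_eq_midpoint: "t \<in> \<Theta> \<Longrightarrow> m t = (p t + p (reflect th t)) / 2"
  by (simp add: p_eq w_reflect m_reflect algebra_simps)

lemma nn_integral_p_finite: "(\<integral>\<^sup>+t. ennreal (p t) \<partial>lebesgue_on \<Theta>) < top"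
  using integrableD(2)[OF integrable_p] by (simp add: less_top)

lemma nn_integral_f_finite: "(\<integral>\<^sup>+t. ennreal (f t) \<partial>lebesgue_on \<Theta>) < top"
  using integrableD(2)[OF integrable_f] by (simp add: less_top)

lemma nn_integral_m_eq_p: "(\<integral>\<^sup>+t. ennreal (m t) \<partial>lebesgue_on \<Theta>) = (\<integral>\<^sup>+t. ennreal (p t) \<partial>lebesgue_on \<Theta>)"
  by (rule nn_integral_eq_of_add_reflect_eq_twice[symmetric])
     (auto simp: m_eq_midpoint p_nonneg ennreal_two_mult simp flip: ennreal_plus)

lemma nn_integral_homogeneous_eq:
  fixes \<phi> :: "real \<Rightarrow> real \<Rightarrow> ennreal"
  assumes [measurable]: "(\<lambda>(x, y). \<phi> x y) \<in> borel_measurable (borel \<Otimes>\<^sub>M borel)"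
    and hom: "\<And>k x y. 0 \<le> k \<Longrightarrow> 0 \<le> x \<Longrightarrow> 0 \<le> y \<Longrightarrow> \<phi> (k * x) (k * y) = ennreal k * \<phi> x y"
  shows "(\<integral>\<^sup>+t. \<phi> (p t) (2 * f t * w t) \<partial>lebesgue_on \<Theta>) = (\<integral>\<^sup>+t. \<phi> (m t) (f t) \<partial>lebesgue_on \<Theta>)"
proof (rule nn_integral_eq_of_add_reflect_eq_twice)
  fix t assume t: "t \<in> \<Theta>"
  \<comment> \<open>both summands are copies of \<open>\<phi> (2 * m t) (2 * f t)\<close>, weighted by \<open>w t\<close> and \<open>1 - w t\<close>\<close>
  let ?x = "2 * m t" and ?y = "2 * f t"
  have "\<phi> (p t) (2 * f t * w t) = ennreal (w t) * \<phi> ?x ?y"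
    using hom[of "w t" ?x ?y] t by (simp add: p_eq m_nonneg f_nonneg w_nonneg mult_ac)
  moreover have "\<phi> (p (reflect th t)) (2 * f (reflect th t) * w (reflect th t)) = ennreal (1 - w t) * \<phi> ?x ?y"
    using hom[of "1 - w t" ?x ?y] t
    by (simp add: p_eq w_reflect m_reflect f_reflect m_nonneg f_nonneg w_le_1 mult_ac)
  moreover have "\<phi> ?x ?y = 2 * \<phi> (m t) (f t)"
    using hom[of 2 "m t" "f t"] t by (simp add: m_nonneg f_nonneg)
  ultimately show "\<phi> (p t) (2 * f t * w t) + \<phi> (p (reflect th t)) (2 * f (reflect th t) * w (reflect th t))
      = 2 * \<phi> (m t) (f t)"
    using t w_nonneg w_le_1 by (simp flip: distrib_right ennreal_plus)
qed measurable

lemma nn_integral_le_of_midpoint_convex: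
  fixes \<phi> :: "real \<Rightarrow> real \<Rightarrow> ennreal"
  assumes [measurable]: "(\<lambda>(x, y). \<phi> x y) \<in> borel_measurable (borel \<Otimes>\<^sub>M borel)"
    and "\<And>x y z. 0 \<le> x \<Longrightarrow> 0 \<le> y \<Longrightarrow> 0 \<le> z \<Longrightarrow> 2 * \<phi> ((x + y) / 2) z \<le> \<phi> x z + \<phi> y z"
  shows "(\<integral>\<^sup>+t. \<phi> (m t) (f t) \<partial>lebesgue_on \<Theta>) \<le> (\<integral>\<^sup>+t. \<phi> (p t) (f t) \<partial>lebesgue_on \<Theta>)"
  by (rule nn_integral_le_of_twice_le_add_reflect)
     (use assms(2) in \<open>auto simp: m_eq_midpoint f_reflect p_nonneg f_nonneg\<close>)

lemma nn_integral_ge_of_midpoint_concave: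
  fixes \<phi> :: "real \<Rightarrow> real \<Rightarrow> ennreal"
  assumes [measurable]: "(\<lambda>(x, y). \<phi> x y) \<in> borel_measurable (borel \<Otimes>\<^sub>M borel)"
    and "\<And>x y z. 0 \<le> x \<Longrightarrow> 0 \<le> y \<Longrightarrow> 0 \<le> z \<Longrightarrow> \<phi> x z + \<phi> y z \<le> 2 * \<phi> ((x + y) / 2) z"
  shows "(\<integral>\<^sup>+t. \<phi> (p t) (f t) \<partial>lebesgue_on \<Theta>) \<le> (\<integral>\<^sup>+t. \<phi> (m t) (f t) \<partial>lebesgue_on \<Theta>)"
  by (rule nn_integral_le_of_add_reflect_le_twice)
     (use assms(2) in \<open>auto simp: m_eq_midpoint f_reflect p_nonneg f_nonneg\<close>)

lemma signed_nn_integral_le_of_midpoint_convex: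
  fixes \<psi> :: "real \<Rightarrow> real \<Rightarrow> ereal"
  assumes [measurable]: "(\<lambda>(x, y). \<psi> x y) \<in> borel_measurable (borel \<Otimes>\<^sub>M borel)"
    and not_minf: "\<And>x y. \<psi> x y \<noteq> -\<infinity>"
    and convex: "\<And>x y z. 0 \<le> x \<Longrightarrow> 0 \<le> y \<Longrightarrow> 0 \<le> z \<Longrightarrow> 2 * \<psi> ((x + y) / 2) z \<le> \<psi> x z + \<psi> y z"
    and neg_le: "\<And>x z. 0 \<le> x \<Longrightarrow> 0 \<le> z \<Longrightarrow> e2ennreal (- \<psi> x z) \<le> ennreal x + ennreal z"
  shows "signed_nn_integral (lebesgue_on \<Theta>) (\<lambda>t. \<psi> (m t) (f t))
       \<le> signed_nn_integral (lebesgue_on \<Theta>) (\<lambda>t. \<psi> (p t) (f t))"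
proof -
  have neg_finite: "(\<integral>\<^sup>+t. e2ennreal (- \<psi> (g t) (f t)) \<partial>lebesgue_on \<Theta>) < top"
    if [measurable]: "g \<in> borel_measurable (lebesgue_on \<Theta>)"
      and "\<And>t. t \<in> \<Theta> \<Longrightarrow> 0 \<le> g t" "(\<integral>\<^sup>+t. ennreal (g t) \<partial>lebesgue_on \<Theta>) < top" for g
  proof -
    have "(\<integral>\<^sup>+t. e2ennreal (- \<psi> (g t) (f t)) \<partial>lebesgue_on \<Theta>)
        \<le> (\<integral>\<^sup>+t. ennreal (g t) + ennreal (f t) \<partial>lebesgue_on \<Theta>)"
    proof (rule nn_integral_mono)
      fix t assume "t \<in> space (lebesgue_on \<Theta>)"
      then have t: "t \<in> \<Theta>" by simp
      show "e2ennreal (- \<psi> (g t) (f t)) \<le> ennreal (g t) + ennreal (f t)"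
        using neg_le[OF that(2)[OF t] f_nonneg[OF t]] .
    qed
    also have "\<dots> < top"
      using that(3) nn_integral_f_finite by (simp add: nn_integral_add ennreal_add_less_top)
    finally show ?thesis .
  qed
  show ?thesis
  proof (rule signed_nn_integral_le_of_twice_le_add_reflect)
    show "2 * \<psi> (m t) (f t) \<le> \<psi> (p t) (f t) + \<psi> (p (reflect th t)) (f (reflect th t))"
      if "t \<in> \<Theta>" for t
      using convex[of "p t" "p (reflect th t)" "f t"] that
      by (simp add: m_eq_midpoint f_reflect p_nonneg f_nonneg)
    show "(\<integral>\<^sup>+t. e2ennreal (- \<psi> (p t) (f t)) \<partial>lebesgue_on \<Theta>) < top"
      by (rule neg_finite) (auto simp: p_nonneg nn_integral_p_finite)
    show "(\<integral>\<^sup>+t. e2ennreal (- \<psi> (m t) (f t)) \<partial>lebesgue_on \<Theta>) < top"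
      by (rule neg_finite) (auto simp: m_nonneg nn_integral_m_eq_p nn_integral_p_finite)
  qed (simp_all add: not_minf)
qed

lemma TV_div_skew_eq: "TV_div (lebesgue_on \<Theta>) p (\<lambda>t. 2 * f t * w t) = TV_div (lebesgue_on \<Theta>) m f"
  unfolding TV_div_def
  by (subst nn_integral_homogeneous_eq[where \<phi>="\<lambda>x y. ennreal \<bar>x - y\<bar>"])
     (simp_all add: ennreal_abs_diff_scale)

lemma TV_div_sym_le: "TV_div (lebesgue_on \<Theta>) m f \<le> TV_div (lebesgue_on \<Theta>) p f"
  unfolding TV_div_def
  using nn_integral_le_of_midpoint_convex[where \<phi>="\<lambda>x y. ennreal \<bar>x - y\<bar>"]
    ennreal_abs_diff_midpoint_convex
  by (intro ereal_mult_left_mono) (simp_all add: less_eq_ennreal.rep_eq[symmetric])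

lemma KL_div_skew_eq: "KL_div (lebesgue_on \<Theta>) p (\<lambda>t. 2 * f t * w t) = KL_div (lebesgue_on \<Theta>) m f"
  unfolding KL_div_def
  by (subst (1 2) nn_integral_homogeneous_eq)
     (simp_all add: kl_integrand_scale e2ennreal_ereal_mult e2ennreal_uminus_ereal_mult)

lemma KL_div_skew_eq_rev: "KL_div (lebesgue_on \<Theta>) (\<lambda>t. 2 * f t * w t) p = KL_div (lebesgue_on \<Theta>) f m"
  unfolding KL_div_def
  using nn_integral_homogeneous_eq[where \<phi>="\<lambda>x y. e2ennreal (kl_integrand y x)"]
    nn_integral_homogeneous_eq[where \<phi>="\<lambda>x y. e2ennreal (- kl_integrand y x)"]
  by (simp add: kl_integrand_scale e2ennreal_ereal_mult e2ennreal_uminus_ereal_mult)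

lemma KL_div_sym_le: "KL_div (lebesgue_on \<Theta>) m f \<le> KL_div (lebesgue_on \<Theta>) p f"
  unfolding KL_div_eq_signed_nn_integral
proof (rule signed_nn_integral_le_of_midpoint_convex)
  show "2 * kl_integrand ((x + y) / 2) z \<le> kl_integrand x z + kl_integrand y z"
    if "0 \<le> x" "0 \<le> y" "0 \<le> z" for x y z
    using kl_integrand_midpoint_convex[OF that] .
  show "e2ennreal (- kl_integrand x z) \<le> ennreal x + ennreal z" if "0 \<le> x" "0 \<le> z" for x z
    using kl_integrand_neg_le[OF that] by (simp add: add_increasing)
qed (simp_all add: kl_integrand_def)

lemma KL_div_sym_le_rev: "KL_div (lebesgue_on \<Theta>) f m \<le> KL_div (lebesgue_on \<Theta>) f p"
  unfolding KL_div_eq_signed_nn_integral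
proof (rule signed_nn_integral_le_of_midpoint_convex[where \<psi>="\<lambda>x z. kl_integrand z x"])
  show "2 * kl_integrand z ((x + y) / 2) \<le> kl_integrand z x + kl_integrand z y"
    if "0 \<le> x" "0 \<le> y" "0 \<le> z" for x y z
    using kl_integrand_midpoint_convex_right[OF that] .
  show "e2ennreal (- kl_integrand z x) \<le> ennreal x + ennreal z" if "0 \<le> x" "0 \<le> z" for x z
    using kl_integrand_neg_le[OF that(2,1)] by (simp add: add_increasing2)
qed (simp_all add: kl_integrand_def)

lemma alpha_div_skew_eq:
  "alpha_div (lebesgue_on \<Theta>) a p (\<lambda>t. 2 * f t * w t) = alpha_div (lebesgue_on \<Theta>) a m f"
proof -
  have "(\<integral>\<^sup>+t. alpha_integrand a (p t) (2 * f t * w t) \<partial>lebesgue_on \<Theta>)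
      = (\<integral>\<^sup>+t. alpha_integrand a (m t) (f t) \<partial>lebesgue_on \<Theta>)"
    by (rule nn_integral_homogeneous_eq) (simp_all add: alpha_integrand_scale)
  then show ?thesis
    by (simp add: alpha_div_def KL_div_skew_eq KL_div_skew_eq_rev)
qed

lemma alpha_div_sym_le: "alpha_div (lebesgue_on \<Theta>) a m f \<le> alpha_div (lebesgue_on \<Theta>) a p f"
proof -
  let ?I = "\<lambda>g. enn2ereal (\<integral>\<^sup>+t. alpha_integrand a (g t) (f t) \<partial>lebesgue_on \<Theta>)"
  consider "a = 1" | "a = 0" | "0 < a" "a < 1" | "a < 0 \<or> 1 < a"
    by linarith
  then show ?thesis
  proof cases
    case 3
    then have "?I p \<le> ?I m"
      using nn_integral_ge_of_midpoint_concave alpha_integrand_midpoint_concave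
      by (simp add: less_eq_ennreal.rep_eq[symmetric])
    then show ?thesis
      using 3 by (simp add: alpha_div_def ereal_minus_mono divide_right_mono)
  next
    case 4
    then have "?I m \<le> ?I p"
      using nn_integral_le_of_midpoint_convex alpha_integrand_midpoint_convex
      by (simp add: less_eq_ennreal.rep_eq[symmetric])
    moreover have "a * (1 - a) < 0"
      using 4 by (auto simp: mult_neg_pos mult_pos_neg)
    ultimately show ?thesis
      using 4 by (auto simp: alpha_div_def intro!: ereal_divide_right_mono_neg ereal_minus_mono)
  qed (simp_all add: alpha_div_def KL_div_sym_le KL_div_sym_le_rev)
qed

end

section \<open>The posterior and the skewness factor\<close>

definition skew_weight :: "real \<Rightarrow> real \<Rightarrow> real" where
  "skew_weight a b = (if a = 0 \<and> a + b = 0 then 1/2 else a / (a + b))"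

lemma skew_factor_eq_skew_weight:
  "skew_factor prior L th t = skew_weight (prior t * L t) (prior (reflect th t) * L (reflect th t))"
  by (simp add: skew_factor_def skew_weight_def Let_def)

lemma skew_weight_bounds: "0 \<le> a \<Longrightarrow> 0 \<le> b \<Longrightarrow> 0 \<le> skew_weight a b \<and> skew_weight a b \<le> 1"
  by (auto simp: skew_weight_def divide_le_eq_1)

lemma skew_weight_swap: "0 \<le> a \<Longrightarrow> 0 \<le> b \<Longrightarrow> skew_weight b a = 1 - skew_weight a b"
  by (cases "a + b = 0") (auto simp: skew_weight_def add.commute field_simps)

lemma skew_weight_split:
  fixes a b c :: real
  assumes "0 \<le> a" "0 \<le> b"
  shows "a / c = 2 * skew_weight a b * ((a / c + b / c) / 2)"
proof (cases "a + b = 0")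
  case False
  then show ?thesis by (simp add: skew_weight_def add_divide_distrib[symmetric])
next
  case True
  then have "a = 0" "b = 0" using assms by auto
  then show ?thesis by simp
qed

lemma posterior_eq_skew_factor:
  assumes "0 \<le> prior t * L t" "0 \<le> prior (reflect th t) * L (reflect th t)"
  shows "posterior M prior L t = 2 * skew_factor prior L th t * sym_posterior M prior L th t"
  unfolding posterior_def sym_posterior_def skew_factor_eq_skew_weight
  by (rule skew_weight_split[OF assms])

lemma sym_posterior_reflect:
  "sym_posterior M prior L th (reflect th t) = sym_posterior M prior L th t"
  by (simp add: sym_posterior_def)

lemma skew_decomposition_posterior:
  fixes \<Theta> :: "'a::euclidean_space set"
  assumes "\<Theta> \<in> sets lebesgue" "symmetric_set th \<Theta>"
    and [measurable]: "prior \<in> borel_measurable (lebesgue_on \<Theta>)" "L \<in> borel_measurable (lebesgue_on \<Theta>)"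
    and "\<forall>t\<in>\<Theta>. prior t \<ge> 0" "\<forall>t\<in>\<Theta>. L t \<ge> 0"
    and "integrable (lebesgue_on \<Theta>) (\<lambda>t. prior t * L t)"
    and [measurable]: "f \<in> borel_measurable (lebesgue_on \<Theta>)"
    and "\<forall>t\<in>\<Theta>. f t \<ge> 0" "integrable (lebesgue_on \<Theta>) f" "sym_about \<Theta> th f"
  shows "skew_decomposition \<Theta> th (posterior (lebesgue_on \<Theta>) prior L)
           (sym_posterior (lebesgue_on \<Theta>) prior L th) f (skew_factor prior L th)"
proof -
  interpret symmetric_domain \<Theta> th by unfold_locales (use assms in auto)
  have PL_nonneg: "0 \<le> prior t * L t" if "t \<in> \<Theta>" for t
    using that assms(5,6) by auto
  have normaliser_nonneg: "0 \<le> (\<integral>s. prior s * L s \<partial>lebesgue_on \<Theta>)"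
    using assms(5,6) by (intro Bochner_Integration.integral_nonneg) auto
  have PL_reflect_nonneg: "0 \<le> prior (reflect th t) * L (reflect th t)" if "t \<in> \<Theta>" for t
    using that PL_nonneg by simp
  show ?thesis
  proof unfold_locales
    show "posterior (lebesgue_on \<Theta>) prior L \<in> borel_measurable (lebesgue_on \<Theta>)"
      unfolding posterior_def[abs_def] by measurable
    then show "sym_posterior (lebesgue_on \<Theta>) prior L th \<in> borel_measurable (lebesgue_on \<Theta>)"
      unfolding sym_posterior_def[abs_def] by measurable
    show "skew_factor prior L th \<in> borel_measurable (lebesgue_on \<Theta>)"
      unfolding skew_factor_eq_skew_weight[abs_def] skew_weight_def by measurable
    show "integrable (lebesgue_on \<Theta>) (posterior (lebesgue_on \<Theta>) prior L)"
      using integrable_divide[OF assms(7)] by (simp add: posterior_def[abs_def])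
    fix t assume t: "t \<in> \<Theta>"
    show "0 \<le> sym_posterior (lebesgue_on \<Theta>) prior L th t"
      using PL_nonneg[OF t] PL_reflect_nonneg[OF t] normaliser_nonneg by (simp add: sym_posterior_def posterior_def)
    show "0 \<le> skew_factor prior L th t" "skew_factor prior L th t \<le> 1"
      using skew_weight_bounds[OF PL_nonneg[OF t] PL_reflect_nonneg[OF t]] by (simp_all add: skew_factor_eq_skew_weight)
    show "posterior (lebesgue_on \<Theta>) prior L t
        = 2 * skew_factor prior L th t * sym_posterior (lebesgue_on \<Theta>) prior L th t"
      by (rule posterior_eq_skew_factor[OF PL_nonneg[OF t] PL_reflect_nonneg[OF t]])
    show "skew_factor prior L th (reflect th t) = 1 - skew_factor prior L th t"
      using skew_weight_swap[OF PL_nonneg[OF t] PL_reflect_nonneg[OF t]] by (simp add: skew_factor_eq_skew_weight)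
    show "sym_posterior (lebesgue_on \<Theta>) prior L th (reflect th t) = sym_posterior (lebesgue_on \<Theta>) prior L th t"
      by (rule sym_posterior_reflect)
    show "f (reflect th t) = f t"
      using bspec[OF assms(11)[unfolded sym_about_def] t] by (rule sym)
  qed (use assms in simp_all)
qed

theorem theorem1:
  fixes \<Theta> :: "'a::euclidean_space set" and th :: 'a
    and prior L f :: "'a \<Rightarrow> real"
  assumes "\<Theta> \<in> sets lebesgue" and "th \<in> \<Theta>" and "symmetric_set th \<Theta>"
    and "prior \<in> borel_measurable (lebesgue_on \<Theta>)" and "\<forall>t\<in>\<Theta>. prior t \<ge> 0"
    and "L \<in> borel_measurable (lebesgue_on \<Theta>)" and "\<forall>t\<in>\<Theta>. L t \<ge> 0"
    and "integrable (lebesgue_on \<Theta>) (\<lambda>t. prior t * L t)"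
    and "(\<integral>t. prior t * L t \<partial>lebesgue_on \<Theta>) > 0"
    and "f \<in> borel_measurable (lebesgue_on \<Theta>)" and "\<forall>t\<in>\<Theta>. f t \<ge> 0"
    and "integrable (lebesgue_on \<Theta>) f" and "(\<integral>t. f t \<partial>lebesgue_on \<Theta>) = 1"
    and "sym_about \<Theta> th f"
  shows "TV_div (lebesgue_on \<Theta>) (posterior (lebesgue_on \<Theta>) prior L) (skew_density prior L f th)
           = TV_div (lebesgue_on \<Theta>) (sym_posterior (lebesgue_on \<Theta>) prior L th) f
       \<and> TV_div (lebesgue_on \<Theta>) (posterior (lebesgue_on \<Theta>) prior L) (skew_density prior L f th)
           \<le> TV_div (lebesgue_on \<Theta>) (posterior (lebesgue_on \<Theta>) prior L) f
       \<and> (\<forall>a::real.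
            alpha_div (lebesgue_on \<Theta>) a (posterior (lebesgue_on \<Theta>) prior L) (skew_density prior L f th)
              = alpha_div (lebesgue_on \<Theta>) a (sym_posterior (lebesgue_on \<Theta>) prior L th) f
          \<and> alpha_div (lebesgue_on \<Theta>) a (posterior (lebesgue_on \<Theta>) prior L) (skew_density prior L f th)
              \<le> alpha_div (lebesgue_on \<Theta>) a (posterior (lebesgue_on \<Theta>) prior L) f)"
proof -
  interpret skew_decomposition \<Theta> th "posterior (lebesgue_on \<Theta>) prior L"
      "sym_posterior (lebesgue_on \<Theta>) prior L th" f "skew_factor prior L th"
    by (rule skew_decomposition_posterior) (use assms in auto)
  have "skew_density prior L f th = (\<lambda>t. 2 * f t * skew_factor prior L th t)"
    by (simp add: fun_eq_iff skew_density_def)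
  then show ?thesis
    using TV_div_skew_eq TV_div_sym_le alpha_div_skew_eq alpha_div_sym_le by simp
qed

end
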